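(* Let $B=\{B_t,\ t\ge0\}$ be a centered Gaussian process with stationary increments and $B_0=0$, let $X_t=\theta t+B_t$, and let $h>0$. Assume that for every $N\ge1$ the Gaussian distribution of $(B_{kh})_{k=1}^N$ is nonsingular, and that $$\mathbb{E}\big[(B_{(k+1)h}-B_{kh})B_h\big]\to 0\quad\text{as }k\to\infty.$$ Let $\hat\theta^{(N)}$ be the maximum likelihood estimator of $\theta$ based on the observations $X_{kh}$, $k=1,\dots,N$, namely $$\hat\theta^{(N)}=\frac{z^\top(\Gamma^{(N)})^{-1}\Delta X^{(N)}}{z^\top(\Gamma^{(N)})^{-1}z},$$ with $z=(h,\dots,h)^\top\in\mathbb{R}^N$. Then $\hat\theta^{(N)}$ is mean-square consistent: $\mathbb{E}(\hat\theta^{(N)}-\theta)^2\to0$ as $N\to\infty$.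
   Context: Here $\Delta X^{(N)}=(X_{kh}-X_{(k-1)h})_{k=1}^N$, $\Delta B^{(N)}=(B_{kh}-B_{(k-1)h})_{k=1}^N$, and $\Gamma^{(N)}$ is the covariance matrix of $\Delta B^{(N)}$. *)

theory Defs
  imports "HOL-Probability.Probability" "Jordan_Normal_Form.Matrix" "Jordan_Normal_Form.Determinant"
begin

definition gaussian_rv :: "'a measure \<Rightarrow> ('a \<Rightarrow> real) \<Rightarrow> bool" where
  "gaussian_rv M X \<longleftrightarrow> X \<in> borel_measurable M \<and>
     ((\<exists>c. AE \<omega> in M. X \<omega> = c) \<or>
      (\<exists>\<mu> \<sigma>. \<sigma> > 0 \<and> distributed M lborel X (normal_density \<mu> \<sigma>)))"

definition gaussian_process :: "'a measure \<Rightarrow> (real \<Rightarrow> 'a \<Rightarrow> real) \<Rightarrow> bool" where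
  "gaussian_process M B \<longleftrightarrow>
     (\<forall>(n::nat) (t::nat \<Rightarrow> real) (c::nat \<Rightarrow> real). (\<forall>i<n. t i \<ge> 0) \<longrightarrow>
        gaussian_rv M (\<lambda>\<omega>. \<Sum>i<n. c i * B (t i) \<omega>))"

definition centered_process :: "'a measure \<Rightarrow> (real \<Rightarrow> 'a \<Rightarrow> real) \<Rightarrow> bool" where
  "centered_process M B \<longleftrightarrow> (\<forall>t\<ge>0. integrable M (B t) \<and> (\<integral>\<omega>. B t \<omega> \<partial>M) = 0)"

definition stationary_increments :: "'a measure \<Rightarrow> (real \<Rightarrow> 'a \<Rightarrow> real) \<Rightarrow> bool" where
  "stationary_increments M B \<longleftrightarrow>
     (\<forall>s\<ge>0. \<forall>(n::nat) (t::nat \<Rightarrow> real). (\<forall>i<n. t i \<ge> 0) \<longrightarrow>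
        distr M (PiM {..<n} (\<lambda>_. borel)) (\<lambda>\<omega>. \<lambda>i\<in>{..<n}. B (s + t i) \<omega> - B s \<omega>)
      = distr M (PiM {..<n} (\<lambda>_. borel)) (\<lambda>\<omega>. \<lambda>i\<in>{..<n}. B (t i) \<omega>))"

definition cov :: "'a measure \<Rightarrow> ('a \<Rightarrow> real) \<Rightarrow> ('a \<Rightarrow> real) \<Rightarrow> real" where
  "cov M X Y = (\<integral>\<omega>. (X \<omega> - (\<integral>\<eta>. X \<eta> \<partial>M)) * (Y \<omega> - (\<integral>\<eta>. Y \<eta> \<partial>M)) \<partial>M)"

text \<open>Covariance matrix of the random vector (Y 1, ..., Y N) (0-based matrix indices).\<close>
definition cov_matrix :: "'a measure \<Rightarrow> (nat \<Rightarrow> 'a \<Rightarrow> real) \<Rightarrow> nat \<Rightarrow> real mat" where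
  "cov_matrix M Y N = mat N N (\<lambda>(i, j). cov M (Y (Suc i)) (Y (Suc j)))"

definition grid_incr :: "(real \<Rightarrow> 'a \<Rightarrow> real) \<Rightarrow> real \<Rightarrow> nat \<Rightarrow> 'a \<Rightarrow> real" where
  "grid_incr Y h k \<omega> = Y (real k * h) \<omega> - Y ((real k - 1) * h) \<omega>"

definition Gamma_mat :: "'a measure \<Rightarrow> (real \<Rightarrow> 'a \<Rightarrow> real) \<Rightarrow> real \<Rightarrow> nat \<Rightarrow> real mat" where
  "Gamma_mat M B h N = cov_matrix M (grid_incr B h) N"

definition mat_inv :: "real mat \<Rightarrow> real mat" where
  "mat_inv A = (THE G. G \<in> carrier_mat (dim_row A) (dim_row A) \<and>
                   A * G = 1\<^sub>m (dim_row A) \<and> G * A = 1\<^sub>m (dim_row A))"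

definition mle_theta ::
  "'a measure \<Rightarrow> (real \<Rightarrow> 'a \<Rightarrow> real) \<Rightarrow> real \<Rightarrow> real \<Rightarrow> nat \<Rightarrow> 'a \<Rightarrow> real" where
  "mle_theta M B \<theta> h N \<omega> =
     (let X = (\<lambda>t \<omega>. \<theta> * t + B t \<omega>);
          G = mat_inv (Gamma_mat M B h N);
          z = vec N (\<lambda>_. h);
          dX = vec N (\<lambda>k. grid_incr X h (Suc k) \<omega>)
      in scalar_prod z (G *\<^sub>v dX) / scalar_prod z (G *\<^sub>v z))"

end

theory Submission
  imports Defs
begin

text \<open>Write \<open>\<Gamma>\<close> for the covariance matrix of the increments and \<open>z = (h, \<dots>, h)\<close>.
  The error of the estimator is \<open>z\<^sup>T \<Gamma>\<^sup>-\<^sup>1 \<Delta>B / q\<close> with \<open>q = z\<^sup>T \<Gamma>\<^sup>-\<^sup>1 z\<close>, and its second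
  moment is \<open>1 / q\<close>. The Cauchy-Schwarz inequality for the positive semidefinite form \<open>\<Gamma>\<close>,
  applied to \<open>\<Gamma>\<^sup>-\<^sup>1 z\<close> and \<open>(1, \<dots>, 1)\<close>, gives \<open>(N h)\<^sup>2 \<le> q \<cdot> \<Sigma>\<^sub>i\<^sub>j \<Gamma>\<^sub>i\<^sub>j\<close>. By stationarity \<open>\<Gamma>\<close>
  is Toeplitz, \<open>\<Gamma>\<^sub>i\<^sub>j = r(|i - j|)\<close> with \<open>r(k) \<longrightarrow> 0\<close>, so \<open>\<Sigma>\<^sub>i\<^sub>j \<Gamma>\<^sub>i\<^sub>j / N\<^sup>2\<close> is bounded by twice
  a Cesaro mean of \<open>|r|\<close> and the mean square error vanishes. \<open>\<Gamma>\<close> is invertible because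
  \<open>\<Gamma> = L C L\<^sup>T\<close>, where \<open>C\<close> is the covariance matrix of \<open>(B\<^sub>k\<^sub>h)\<close> and \<open>L\<close> is the unit lower
  bidiagonal differencing matrix.\<close>

lemma gaussian_rv_measurable: "gaussian_rv M X \<Longrightarrow> X \<in> borel_measurable M"
  unfolding gaussian_rv_def by simp

lemma gaussian_rv_square_integrable:
  assumes "prob_space M" "gaussian_rv M X"
  shows "integrable M (\<lambda>\<omega>. (X \<omega>)\<^sup>2)"
proof -
  interpret prob_space M by fact
  have X: "X \<in> borel_measurable M" using assms(2) by (rule gaussian_rv_measurable)
  from assms(2) consider c where "AE \<omega> in M. X \<omega> = c"
    | \<mu> \<sigma> where "\<sigma> > 0" "distributed M lborel X (normal_density \<mu> \<sigma>)"
    unfolding gaussian_rv_def by auto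
  then show ?thesis
  proof cases
    case (1 c)
    have "AE \<omega> in M. c\<^sup>2 = (X \<omega>)\<^sup>2" using 1 by auto
    moreover have "(\<lambda>\<omega>. (X \<omega>)\<^sup>2) \<in> borel_measurable M" using X by measurable
    ultimately show ?thesis by (subst integrable_cong_AE[where g="\<lambda>_. c\<^sup>2"]) auto
  next
    case (2 \<mu> \<sigma>)
    have moments: "normal_density \<mu> \<sigma> x * x\<^sup>2 = normal_density \<mu> \<sigma> x * (x - \<mu>)\<^sup>2
       + 2 * \<mu> * (normal_density \<mu> \<sigma> x * (x - \<mu>) ^ 1) + \<mu>\<^sup>2 * normal_density \<mu> \<sigma> x" for x
      by (simp add: power2_eq_square algebra_simps)
    have "integrable lborel (\<lambda>x. normal_density \<mu> \<sigma> x * x\<^sup>2)"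
      unfolding moments using 2
      by (intro Bochner_Integration.integrable_add Bochner_Integration.integrable_mult_right
          integrable_normal_moment integrable_normal_density) auto
    then show ?thesis
      using distributed_integrable[OF 2(2), of "\<lambda>x. x\<^sup>2"] by simp
  qed
qed

lemma integrable_mult_of_square_integrable:
  fixes X Y :: "'a \<Rightarrow> real"
  assumes "X \<in> borel_measurable M" "Y \<in> borel_measurable M"
    and "integrable M (\<lambda>\<omega>. (X \<omega>)\<^sup>2)" "integrable M (\<lambda>\<omega>. (Y \<omega>)\<^sup>2)"
  shows "integrable M (\<lambda>\<omega>. X \<omega> * Y \<omega>)"
proof (rule Bochner_Integration.integrable_bound[where f="\<lambda>\<omega>. (X \<omega>)\<^sup>2 + (Y \<omega>)\<^sup>2"])
  have "\<bar>x * y\<bar> \<le> \<bar>x\<^sup>2 + y\<^sup>2\<bar>" for x y :: real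
  proof -
    have "2 * (\<bar>x\<bar> * \<bar>y\<bar>) \<le> x\<^sup>2 + y\<^sup>2"
      using sum_squares_bound[of "\<bar>x\<bar>" "\<bar>y\<bar>"] by (simp add: mult.assoc)
    moreover have "0 \<le> \<bar>x\<bar> * \<bar>y\<bar>" by simp
    ultimately show ?thesis by (simp add: abs_mult; linarith)
  qed
  then show "AE \<omega> in M. norm (X \<omega> * Y \<omega>) \<le> norm ((X \<omega>)\<^sup>2 + (Y \<omega>)\<^sup>2)" by simp
  show "integrable M (\<lambda>\<omega>. (X \<omega>)\<^sup>2 + (Y \<omega>)\<^sup>2)" using assms by simp
  show "(\<lambda>\<omega>. X \<omega> * Y \<omega>) \<in> borel_measurable M" using assms by measurable
qed

lemma integral_sum_mult_sum:
  fixes X :: "nat \<Rightarrow> 'a \<Rightarrow> real"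
  assumes "finite I" and "\<And>i. i \<in> I \<Longrightarrow> X i \<in> borel_measurable M"
    and "\<And>i. i \<in> I \<Longrightarrow> integrable M (\<lambda>\<omega>. (X i \<omega>)\<^sup>2)"
  shows "(\<integral>\<omega>. (\<Sum>i\<in>I. a i * X i \<omega>) * (\<Sum>j\<in>I. b j * X j \<omega>) \<partial>M)
     = (\<Sum>i\<in>I. \<Sum>j\<in>I. a i * b j * (\<integral>\<omega>. X i \<omega> * X j \<omega> \<partial>M))"
proof -
  have expand: "(\<Sum>i\<in>I. a i * X i \<omega>) * (\<Sum>j\<in>I. b j * X j \<omega>)
     = (\<Sum>i\<in>I. \<Sum>j\<in>I. a i * b j * (X i \<omega> * X j \<omega>))" for \<omega>
    by (simp add: sum_product algebra_simps)
  have "integrable M (\<lambda>\<omega>. X i \<omega> * X j \<omega>)" if "i \<in> I" "j \<in> I" for i j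
    using integrable_mult_of_square_integrable assms that by blast
  then show ?thesis
    unfolding expand by (simp add: Bochner_Integration.integral_sum Bochner_Integration.integrable_sum)
qed

lemma stationary_increments_integral_shift:
  fixes B :: "real \<Rightarrow> 'a \<Rightarrow> real"
  assumes si: "stationary_increments M B"
    and meas: "\<And>t. t \<ge> 0 \<Longrightarrow> B t \<in> borel_measurable M"
    and "s \<ge> 0" "a \<ge> 0" "b \<ge> 0" "c \<ge> 0"
  shows "(\<integral>\<omega>. (B (s + a) \<omega> - B (s + b) \<omega>) * (B (s + c) \<omega> - B s \<omega>) \<partial>M)
       = (\<integral>\<omega>. (B a \<omega> - B b \<omega>) * B c \<omega> \<partial>M)"
proof -
  define t where "t = (\<lambda>i::nat. if i = 0 then a else if i = 1 then b else c)"
  have t_nonneg: "\<forall>i<3. t i \<ge> 0" using assms unfolding t_def by auto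
  let ?P = "PiM {..<3::nat} (\<lambda>_. borel :: real measure)"
  define f where "f = (\<lambda>v::nat \<Rightarrow> real. (v 0 - v 1) * v 2)"
  have f: "f \<in> borel_measurable ?P" unfolding f_def by measurable
  have shifted: "(\<lambda>\<omega>. \<lambda>i\<in>{..<3}. B (s + t i) \<omega> - B s \<omega>) \<in> measurable M ?P"
    by (rule measurable_restrict) (use meas t_nonneg \<open>s \<ge> 0\<close> in auto)
  have unshifted: "(\<lambda>\<omega>. \<lambda>i\<in>{..<3}. B (t i) \<omega>) \<in> measurable M ?P"
    by (rule measurable_restrict) (use meas t_nonneg in auto)
  have "distr M ?P (\<lambda>\<omega>. \<lambda>i\<in>{..<3}. B (s + t i) \<omega> - B s \<omega>)
      = distr M ?P (\<lambda>\<omega>. \<lambda>i\<in>{..<3}. B (t i) \<omega>)"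
    using si t_nonneg \<open>s \<ge> 0\<close> unfolding stationary_increments_def by blast
  then have "integral\<^sup>L (distr M ?P (\<lambda>\<omega>. \<lambda>i\<in>{..<3}. B (s + t i) \<omega> - B s \<omega>)) f
      = integral\<^sup>L (distr M ?P (\<lambda>\<omega>. \<lambda>i\<in>{..<3}. B (t i) \<omega>)) f" by simp
  then show ?thesis
    unfolding integral_distr[OF shifted f] integral_distr[OF unshifted f]
    by (simp add: f_def t_def)
qed

lemma mat_inv_det_nonzero:
  fixes A :: "real mat"
  assumes A: "A \<in> carrier_mat n n" and "det A \<noteq> 0"
  shows "mat_inv A \<in> carrier_mat n n" "A * mat_inv A = 1\<^sub>m n" "mat_inv A * A = 1\<^sub>m n"
proof -
  have "A \<in> Units (ring_mat TYPE(real) n ())" by (rule det_non_zero_imp_unit) fact+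
  then obtain G where G: "G \<in> carrier_mat n n" "G * A = 1\<^sub>m n" "A * G = 1\<^sub>m n"
    unfolding Units_def ring_mat_def by auto
  have unique: "G' = G" if "G' \<in> carrier_mat n n" "G' * A = 1\<^sub>m n" for G'
  proof -
    have "G' = G' * (A * G)" using that(1) G(3) by simp
    also have "\<dots> = (G' * A) * G" using assoc_mult_mat[OF that(1) A G(1)] by simp
    finally show ?thesis using that(2) G(1) by simp
  qed
  have dim: "dim_row A = n" using A by simp
  have "mat_inv A = G"
    unfolding mat_inv_def dim
  proof (rule the_equality)
    show "G \<in> carrier_mat n n \<and> A * G = 1\<^sub>m n \<and> G * A = 1\<^sub>m n" using G by simp
  qed (use unique in blast)
  then show "mat_inv A \<in> carrier_mat n n" "A * mat_inv A = 1\<^sub>m n" "mat_inv A * A = 1\<^sub>m n"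
    using G by auto
qed

lemma scalar_prod_const_mult_mat_vec:
  fixes G :: "real mat"
  assumes "G \<in> carrier_mat N N"
  shows "scalar_prod (vec N (\<lambda>_. h)) (G *\<^sub>v vec N f) = (\<Sum>j<N. (\<Sum>i<N. h * G $$ (i, j)) * f j)"
proof -
  have "scalar_prod (vec N (\<lambda>_. h)) (G *\<^sub>v vec N f) = (\<Sum>i<N. \<Sum>j<N. h * G $$ (i, j) * f j)"
    using assms by (simp add: scalar_prod_def atLeast0LessThan sum_distrib_left mult.assoc)
  also have "\<dots> = (\<Sum>j<N. (\<Sum>i<N. h * G $$ (i, j)) * f j)"
    by (subst sum.swap) (simp add: sum_distrib_right)
  finally show ?thesis .
qed

lemma quadratic_nonneg_imp_discriminant_le:
  fixes A B C :: real
  assumes "C \<ge> 0" and nonneg: "\<And>t. 0 \<le> A + 2 * t * B + t\<^sup>2 * C"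
  shows "B\<^sup>2 \<le> A * C"
proof (cases "C = 0")
  case True
  have "B = 0"
  proof (rule ccontr)
    assume "B \<noteq> 0"
    then have "A + 2 * (- (A + 1) / (2 * B)) * B = -1" by (simp add: field_simps)
    then show False using nonneg[of "- (A + 1) / (2 * B)"] True by simp
  qed
  then show ?thesis using True by simp
next
  case False
  then have "C > 0" using \<open>C \<ge> 0\<close> by simp
  have "0 \<le> A + 2 * (- B / C) * B + (- B / C)\<^sup>2 * C" by (rule nonneg)
  also have "\<dots> = A - B\<^sup>2 / C" using \<open>C > 0\<close> by (simp add: field_simps power2_eq_square)
  finally show ?thesis using \<open>C > 0\<close> by (simp add: field_simps)
qed

lemma psd_form_Cauchy_Schwarz:
  fixes E :: "nat \<Rightarrow> nat \<Rightarrow> real"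
  assumes sym: "\<And>i j. E i j = E j i"
    and psd: "\<And>c. 0 \<le> (\<Sum>i<N. \<Sum>j<N. c i * c j * E i j)"
  shows "(\<Sum>i<N. \<Sum>j<N. a i * b j * E i j)\<^sup>2
       \<le> (\<Sum>i<N. \<Sum>j<N. a i * a j * E i j) * (\<Sum>i<N. \<Sum>j<N. b i * b j * E i j)"
proof (rule quadratic_nonneg_imp_discriminant_le[OF psd])
  fix t
  have swap: "(\<Sum>i<N. \<Sum>j<N. b i * a j * E i j) = (\<Sum>i<N. \<Sum>j<N. a i * b j * E i j)"
    by (subst sum.swap) (simp add: sym mult.commute)
  have "(a i + t * b i) * (a j + t * b j) * E i j = a i * a j * E i j
      + t * (a i * b j * E i j) + t * (b i * a j * E i j) + t\<^sup>2 * (b i * b j * E i j)" for i j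
    by (simp add: algebra_simps power2_eq_square)
  then have "(\<Sum>i<N. \<Sum>j<N. (a i + t * b i) * (a j + t * b j) * E i j)
     = (\<Sum>i<N. \<Sum>j<N. a i * a j * E i j) + t * (\<Sum>i<N. \<Sum>j<N. a i * b j * E i j)
       + t * (\<Sum>i<N. \<Sum>j<N. b i * a j * E i j) + t\<^sup>2 * (\<Sum>i<N. \<Sum>j<N. b i * b j * E i j)"
    by (simp add: sum.distrib sum_distrib_left)
  also have "\<dots> = (\<Sum>i<N. \<Sum>j<N. a i * a j * E i j) + 2 * t * (\<Sum>i<N. \<Sum>j<N. a i * b j * E i j)
       + t\<^sup>2 * (\<Sum>i<N. \<Sum>j<N. b i * b j * E i j)"
    unfolding swap by simp
  finally have "(\<Sum>i<N. \<Sum>j<N. (a i + t * b i) * (a j + t * b j) * E i j)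
     = (\<Sum>i<N. \<Sum>j<N. a i * a j * E i j) + 2 * t * (\<Sum>i<N. \<Sum>j<N. a i * b j * E i j)
       + t\<^sup>2 * (\<Sum>i<N. \<Sum>j<N. b i * b j * E i j)" .
  then show "0 \<le> (\<Sum>i<N. \<Sum>j<N. a i * a j * E i j) + 2 * t * (\<Sum>i<N. \<Sum>j<N. a i * b j * E i j)
       + t\<^sup>2 * (\<Sum>i<N. \<Sum>j<N. b i * b j * E i j)"
    using psd[of "\<lambda>i. a i + t * b i"] by simp
qed

lemma Cesaro_mean_tendsto_zero:
  fixes b :: "nat \<Rightarrow> real"
  assumes nonneg: "\<And>k. b k \<ge> 0" and lim: "b \<longlonglongrightarrow> 0"
  shows "(\<lambda>N. (\<Sum>k<N. b k) / real N) \<longlonglongrightarrow> 0"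
proof (rule LIMSEQ_I)
  fix \<epsilon> :: real assume "\<epsilon> > 0"
  then obtain K where "\<forall>k\<ge>K. norm (b k - 0) < \<epsilon> / 2"
    using LIMSEQ_D[OF lim, of "\<epsilon> / 2"] by auto
  then have K: "b k < \<epsilon> / 2" if "k \<ge> K" for k
    using that by auto
  define C where "C = (\<Sum>k<K. b k)"
  obtain N0 :: nat where N0: "real N0 > 2 * C / \<epsilon>" using reals_Archimedean2 by blast
  show "\<exists>n0. \<forall>n\<ge>n0. norm ((\<Sum>k<n. b k) / real n - 0) < \<epsilon>"
  proof (intro exI[of _ "max (Suc N0) K"] allI impI)
    fix n assume n: "max (Suc N0) K \<le> n"
    have "2 * C / \<epsilon> < real n" using N0 n by linarith
    have "(\<Sum>k<n. b k) = C + (\<Sum>k\<in>{K..<n}. b k)"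
      unfolding C_def using n by (simp add: atLeast0LessThan[symmetric] sum.atLeastLessThan_concat)
    also have "(\<Sum>k\<in>{K..<n}. b k) \<le> real (card {K..<n}) * (\<epsilon> / 2)"
      by (rule sum_bounded_above) (use K in \<open>auto intro: less_imp_le\<close>)
    also have "\<dots> \<le> real n * (\<epsilon> / 2)"
      using \<open>\<epsilon> > 0\<close> by (intro mult_right_mono) auto
    also have "C < real n * (\<epsilon> / 2)" using \<open>2 * C / \<epsilon> < real n\<close> \<open>\<epsilon> > 0\<close>
      by (simp add: field_simps)
    finally have "(\<Sum>k<n. b k) / real n < \<epsilon>" using n by (simp add: field_simps)
    moreover have "(\<Sum>k<n. b k) / real n \<ge> 0" using nonneg by (simp add: sum_nonneg)
    ultimately show "norm ((\<Sum>k<n. b k) / real n - 0) < \<epsilon>" by simp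
  qed
qed

lemma Toeplitz_sum_le:
  fixes b :: "nat \<Rightarrow> real"
  assumes nonneg: "\<And>k. b k \<ge> 0"
  shows "(\<Sum>i<N. \<Sum>j<N. b (if j \<le> i then i - j else j - i)) \<le> 2 * real N * (\<Sum>k<N. b k)"
proof -
  have reindex_le: "(\<Sum>j\<in>A. b (g j)) \<le> (\<Sum>k<N. b k)" if "inj_on g A" "g ` A \<subseteq> {..<N}" for g :: "nat \<Rightarrow> nat" and A
    using sum.reindex[OF that(1), of b] sum_mono2[of "{..<N}" "g ` A" b] that nonneg by simp
  have row: "(\<Sum>j<N. b (if j \<le> i then i - j else j - i)) \<le> 2 * (\<Sum>k<N. b k)" if "i < N" for i
  proof -
    have "(\<Sum>j<N. b (if j \<le> i then i - j else j - i))
       = (\<Sum>j\<in>{j\<in>{..<N}. j \<le> i}. b (i - j)) + (\<Sum>j\<in>{j\<in>{..<N}. \<not> j \<le> i}. b (j - i))"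
      unfolding sum.inter_filter[OF finite_lessThan] sum.distrib[symmetric] by (intro sum.cong) auto
    also have "\<dots> \<le> (\<Sum>k<N. b k) + (\<Sum>k<N. b k)"
      using that by (intro add_mono reindex_le) (auto simp: inj_on_def)
    finally show ?thesis by simp
  qed
  have "(\<Sum>i<N. \<Sum>j<N. b (if j \<le> i then i - j else j - i)) \<le> (\<Sum>i<N. 2 * (\<Sum>k<N. b k))"
    using row by (intro sum_mono) auto
  then show ?thesis by simp
qed

definition diff_mat :: "nat \<Rightarrow> real mat" where
  "diff_mat N = mat N N (\<lambda>(i, j). if j = i then 1 else if Suc j = i then -1 else 0)"

lemma diff_mat_carrier: "diff_mat N \<in> carrier_mat N N"
  unfolding diff_mat_def by simp

lemma det_diff_mat: "det (diff_mat N) = 1"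
proof -
  have "det (diff_mat N) = prod_list (diag_mat (diff_mat N))"
    by (rule det_lower_triangular[OF _ diff_mat_carrier]) (auto simp: diff_mat_def)
  moreover have "diag_mat (diff_mat N) = map (\<lambda>_. 1) [0..<N]"
    unfolding diag_mat_def by (auto simp: diff_mat_def)
  moreover have "prod_list (map (\<lambda>_. 1 :: real) xs) = 1" for xs :: "nat list"
    by (induction xs) auto
  ultimately show ?thesis by simp
qed

locale gaussian_stationary_increments =
  fixes M :: "'a measure" and B :: "real \<Rightarrow> 'a \<Rightarrow> real" and h :: real
  assumes prob: "prob_space M" and gaussian: "gaussian_process M B"
    and centered: "centered_process M B" and stationary: "stationary_increments M B"
    and start_zero: "\<forall>\<omega>\<in>space M. B 0 \<omega> = 0" and step_pos: "h > 0"
begin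

lemma gaussian_rv_B: "t \<ge> 0 \<Longrightarrow> gaussian_rv M (B t)"
  using gaussian[unfolded gaussian_process_def, rule_format, of 1 "\<lambda>_. t" "\<lambda>_. 1"] by simp

lemma measurable_B: "t \<ge> 0 \<Longrightarrow> B t \<in> borel_measurable M"
  by (rule gaussian_rv_measurable[OF gaussian_rv_B])

lemma square_integrable_B: "t \<ge> 0 \<Longrightarrow> integrable M (\<lambda>\<omega>. (B t \<omega>)\<^sup>2)"
  by (rule gaussian_rv_square_integrable[OF prob gaussian_rv_B])

lemma integral_B: "t \<ge> 0 \<Longrightarrow> (\<integral>\<omega>. B t \<omega> \<partial>M) = 0"
  using centered unfolding centered_process_def by auto

lemma grid_incr_Suc: "grid_incr B h (Suc i) = (\<lambda>\<omega>. B (real (Suc i) * h) \<omega> - B (real i * h) \<omega>)"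
  by (rule ext) (simp add: grid_incr_def)

lemma gaussian_rv_grid_incr: "gaussian_rv M (grid_incr B h (Suc i))"
proof -
  let ?t = "\<lambda>k::nat. if k = 0 then real (Suc i) * h else real i * h"
  have "gaussian_rv M (\<lambda>\<omega>. \<Sum>k<2. (if k = 0 then 1 else -1) * B (?t k) \<omega>)"
    using gaussian[unfolded gaussian_process_def, rule_format, of 2 ?t] step_pos by simp
  then show ?thesis unfolding grid_incr_Suc by (simp add: numeral_2_eq_2)
qed

lemma measurable_grid_incr: "grid_incr B h (Suc i) \<in> borel_measurable M"
  by (rule gaussian_rv_measurable[OF gaussian_rv_grid_incr])

lemma square_integrable_grid_incr: "integrable M (\<lambda>\<omega>. (grid_incr B h (Suc i) \<omega>)\<^sup>2)"
  by (rule gaussian_rv_square_integrable[OF prob gaussian_rv_grid_incr])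

lemma integral_grid_incr: "(\<integral>\<omega>. grid_incr B h (Suc i) \<omega> \<partial>M) = 0"
  unfolding grid_incr_Suc using integral_B step_pos centered
  by (simp add: centered_process_def)

definition incr_cov :: "nat \<Rightarrow> nat \<Rightarrow> real" where
  "incr_cov i j = (\<integral>\<omega>. grid_incr B h (Suc i) \<omega> * grid_incr B h (Suc j) \<omega> \<partial>M)"

definition incr_autocov :: "nat \<Rightarrow> real" where
  "incr_autocov k = (\<integral>\<omega>. (B (real (Suc k) * h) \<omega> - B (real k * h) \<omega>) * B h \<omega> \<partial>M)"

lemma incr_cov_sym: "incr_cov i j = incr_cov j i"
  unfolding incr_cov_def by (simp add: mult.commute)

lemma Gamma_mat_carrier: "Gamma_mat M B h N \<in> carrier_mat N N"
  unfolding Gamma_mat_def cov_matrix_def by simp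

lemma Gamma_mat_index: "i < N \<Longrightarrow> j < N \<Longrightarrow> Gamma_mat M B h N $$ (i, j) = incr_cov i j"
  unfolding Gamma_mat_def cov_matrix_def cov_def incr_cov_def by (simp add: integral_grid_incr)

lemma incr_cov_eq_incr_autocov: "incr_cov i j = incr_autocov (if j \<le> i then i - j else j - i)"
proof -
  have shift: "incr_cov i j = incr_autocov (i - j)" if "j \<le> i" for i j
  proof -
    have "(\<integral>\<omega>. (B (real j * h + real (Suc (i - j)) * h) \<omega> - B (real j * h + real (i - j) * h) \<omega>)
        * (B (real j * h + h) \<omega> - B (real j * h) \<omega>) \<partial>M)
      = incr_autocov (i - j)"
      unfolding incr_autocov_def
      by (rule stationary_increments_integral_shift[OF stationary measurable_B]) (use step_pos in auto)
    moreover have "real j * h + real (Suc (i - j)) * h = real (Suc i) * h"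
      "real j * h + real (i - j) * h = real i * h" "real j * h + h = real (Suc j) * h"
      using that by (simp_all add: of_nat_diff algebra_simps)
    ultimately show ?thesis unfolding incr_cov_def grid_incr_Suc by simp
  qed
  show ?thesis using shift[of j i] shift[of i j] incr_cov_sym[of i j] by auto
qed

lemma incr_cov_psd: "0 \<le> (\<Sum>i<N. \<Sum>j<N. a i * a j * incr_cov i j)"
proof -
  have "(\<Sum>i<N. \<Sum>j<N. a i * a j * incr_cov i j)
     = (\<integral>\<omega>. (\<Sum>i<N. a i * grid_incr B h (Suc i) \<omega>) * (\<Sum>j<N. a j * grid_incr B h (Suc j) \<omega>) \<partial>M)"
    unfolding incr_cov_def
    by (rule integral_sum_mult_sum[symmetric]) (auto intro: measurable_grid_incr square_integrable_grid_incr)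
  also have "\<dots> \<ge> 0" by (rule integral_nonneg_AE) auto
  finally show ?thesis .
qed

abbreviation grid_cov :: "nat \<Rightarrow> real mat" where
  "grid_cov N \<equiv> cov_matrix M (\<lambda>k. B (real k * h)) N"

lemma grid_cov_index: "a < N \<Longrightarrow> b < N \<Longrightarrow>
  grid_cov N $$ (a, b) = (\<integral>\<omega>. B (real (Suc a) * h) \<omega> * B (real (Suc b) * h) \<omega> \<partial>M)"
  unfolding cov_matrix_def cov_def using integral_B step_pos by simp

lemma grid_cov_carrier: "grid_cov N \<in> carrier_mat N N"
  unfolding cov_matrix_def by simp

lemma diff_mat_mult_grid: assumes "i < N" "\<omega> \<in> space M"
  shows "(\<Sum>a<N. diff_mat N $$ (i, a) * B (real (Suc a) * h) \<omega>) = grid_incr B h (Suc i) \<omega>"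
proof (cases i)
  case 0
  have "(\<Sum>a<N. diff_mat N $$ (i, a) * B (real (Suc a) * h) \<omega>)
      = (\<Sum>a<N. if a = 0 then B (real (Suc a) * h) \<omega> else 0)"
    by (rule sum.cong) (use assms in \<open>auto simp: diff_mat_def 0\<close>)
  then show ?thesis using start_zero assms by (simp add: grid_incr_def 0)
next
  case (Suc k)
  have "(\<Sum>a<N. diff_mat N $$ (i, a) * B (real (Suc a) * h) \<omega>)
      = (\<Sum>a<N. (if a = i then B (real (Suc a) * h) \<omega> else 0)
          + (if a = k then - B (real (Suc a) * h) \<omega> else 0))"
    by (rule sum.cong) (use assms in \<open>auto simp: diff_mat_def Suc\<close>)
  then show ?thesis using assms Suc by (simp add: sum.distrib grid_incr_def)
qed

lemma Gamma_mat_factor: "Gamma_mat M B h N = diff_mat N * grid_cov N * transpose_mat (diff_mat N)"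
  (is "_ = ?L * ?C * transpose_mat ?L")
proof (rule eq_matI)
  fix i j assume "i < dim_row (?L * ?C * transpose_mat ?L)" "j < dim_col (?L * ?C * transpose_mat ?L)"
  then have i: "i < N" and j: "j < N" using diff_mat_carrier[of N] grid_cov_carrier[of N] by auto
  have "(?L * ?C * transpose_mat ?L) $$ (i, j) = (\<Sum>a<N. \<Sum>b<N. ?L $$ (i, a) * (?C $$ (a, b) * ?L $$ (j, b)))"
    using i j diff_mat_carrier[of N] grid_cov_carrier[of N]
    by (simp add: scalar_prod_def atLeast0LessThan sum_distrib_left)
  also have "\<dots> = (\<Sum>a<N. \<Sum>b<N. ?L $$ (i, a) * ?L $$ (j, b) *
       (\<integral>\<omega>. B (real (Suc a) * h) \<omega> * B (real (Suc b) * h) \<omega> \<partial>M))"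
    by (intro sum.cong refl) (simp add: grid_cov_index)
  also have "\<dots> = (\<integral>\<omega>. (\<Sum>a<N. ?L $$ (i, a) * B (real (Suc a) * h) \<omega>) *
        (\<Sum>b<N. ?L $$ (j, b) * B (real (Suc b) * h) \<omega>) \<partial>M)"
    by (rule integral_sum_mult_sum[where X="\<lambda>a. B (real (Suc a) * h)", symmetric])
      (use step_pos in \<open>auto intro: measurable_B square_integrable_B\<close>)
  also have "\<dots> = incr_cov i j"
    unfolding incr_cov_def
    by (rule Bochner_Integration.integral_cong)
      (auto simp: diff_mat_mult_grid[OF i] diff_mat_mult_grid[OF j] simp del: of_nat_Suc)
  finally show "Gamma_mat M B h N $$ (i, j) = (?L * ?C * transpose_mat ?L) $$ (i, j)"
    using Gamma_mat_index i j by simp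
qed (use Gamma_mat_carrier[of N] diff_mat_carrier[of N] grid_cov_carrier[of N] in auto)

lemma det_Gamma_mat: "det (Gamma_mat M B h N) = det (grid_cov N)"
proof -
  have "det (Gamma_mat M B h N) = det (diff_mat N * grid_cov N) * det (transpose_mat (diff_mat N))"
    unfolding Gamma_mat_factor
    by (rule det_mult) (use mult_carrier_mat[OF diff_mat_carrier grid_cov_carrier] diff_mat_carrier in auto)
  then show ?thesis
    using det_mult[OF diff_mat_carrier grid_cov_carrier] det_diff_mat det_transpose[OF diff_mat_carrier]
    by simp
qed

definition mle_weight :: "nat \<Rightarrow> nat \<Rightarrow> real" where
  "mle_weight N j = (\<Sum>i<N. h * mat_inv (Gamma_mat M B h N) $$ (i, j))"

definition mle_precision :: "nat \<Rightarrow> real" where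
  "mle_precision N = (\<Sum>j<N. mle_weight N j * h)"

lemma mat_inv_Gamma_mat:
  assumes "det (grid_cov N) \<noteq> 0"
  shows "mat_inv (Gamma_mat M B h N) \<in> carrier_mat N N"
    "mat_inv (Gamma_mat M B h N) * Gamma_mat M B h N = 1\<^sub>m N"
  using mat_inv_det_nonzero[OF Gamma_mat_carrier] assms by (simp_all add: det_Gamma_mat)

lemma mle_weight_incr_cov:
  assumes "det (grid_cov N) \<noteq> 0" and k: "k < N"
  shows "(\<Sum>j<N. mle_weight N j * incr_cov j k) = h"
proof -
  let ?G = "mat_inv (Gamma_mat M B h N)"
  have inv: "(\<Sum>j<N. ?G $$ (i, j) * incr_cov j k) = (if i = k then 1 else 0)" if i: "i < N" for i
  proof -
    have "(?G * Gamma_mat M B h N) $$ (i, k) = (\<Sum>j<N. ?G $$ (i, j) * incr_cov j k)"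
      using mat_inv_Gamma_mat(1)[OF assms(1)] Gamma_mat_carrier[of N] i k
      by (simp add: scalar_prod_def atLeast0LessThan Gamma_mat_index)
    then show ?thesis using mat_inv_Gamma_mat(2)[OF assms(1)] i k by simp
  qed
  have "(\<Sum>j<N. mle_weight N j * incr_cov j k) = (\<Sum>i<N. h * (\<Sum>j<N. ?G $$ (i, j) * incr_cov j k))"
    unfolding mle_weight_def sum_distrib_right sum_distrib_left
    by (subst sum.swap) (simp add: mult.assoc)
  also have "\<dots> = (\<Sum>i<N. if i = k then h else 0)" by (intro sum.cong) (simp_all add: inv)
  also have "\<dots> = h" using k by simp
  finally show ?thesis .
qed

lemma mle_precision_eq_form:
  assumes "det (grid_cov N) \<noteq> 0"
  shows "(\<Sum>i<N. \<Sum>j<N. mle_weight N i * mle_weight N j * incr_cov i j) = mle_precision N"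
proof -
  have "(\<Sum>i<N. \<Sum>j<N. mle_weight N i * mle_weight N j * incr_cov i j)
      = (\<Sum>j<N. mle_weight N j * (\<Sum>i<N. mle_weight N i * incr_cov i j))"
    by (subst sum.swap) (simp add: sum_distrib_left algebra_simps)
  then show ?thesis unfolding mle_precision_def using mle_weight_incr_cov[OF assms] by simp
qed

lemma mle_precision_lower_bound:
  assumes "det (grid_cov N) \<noteq> 0"
  shows "(real N * h)\<^sup>2 \<le> mle_precision N * (\<Sum>i<N. \<Sum>j<N. incr_cov i j)"
proof -
  have "(\<Sum>i<N. \<Sum>j<N. mle_weight N i * 1 * incr_cov i j) = (\<Sum>j<N. \<Sum>i<N. mle_weight N i * incr_cov i j)"
    by (subst sum.swap) simp
  also have "\<dots> = real N * h" using mle_weight_incr_cov[OF assms] by simp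
  finally show ?thesis
    using psd_form_Cauchy_Schwarz[where N=N and a="mle_weight N" and b="\<lambda>_. 1", OF incr_cov_sym incr_cov_psd]
    by (simp add: mle_precision_eq_form[OF assms])
qed

lemma mle_precision_pos:
  assumes "N \<ge> 1" and "det (grid_cov N) \<noteq> 0"
  shows "mle_precision N > 0"
proof -
  have "mle_precision N \<ge> 0"
    using incr_cov_psd[where N=N and a="mle_weight N"] mle_precision_eq_form[OF assms(2)] by simp
  moreover have "(real N * h)\<^sup>2 > 0" using assms(1) step_pos by simp
  ultimately show ?thesis using mle_precision_lower_bound[OF assms(2)] by (cases "mle_precision N = 0") auto
qed

lemma mle_theta_error:
  assumes "N \<ge> 1" and "det (grid_cov N) \<noteq> 0"
  shows "mle_theta M B \<theta> h N \<omega> - \<theta>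
       = (\<Sum>j<N. mle_weight N j * grid_incr B h (Suc j) \<omega>) / mle_precision N"
proof -
  have incr_X: "grid_incr (\<lambda>t \<omega>. \<theta> * t + B t \<omega>) h (Suc j) \<omega> = \<theta> * h + grid_incr B h (Suc j) \<omega>" for j
    by (simp add: grid_incr_def algebra_simps)
  have "mle_theta M B \<theta> h N \<omega>
      = (\<Sum>j<N. mle_weight N j * (\<theta> * h + grid_incr B h (Suc j) \<omega>)) / mle_precision N"
    unfolding mle_theta_def Let_def scalar_prod_const_mult_mat_vec[OF mat_inv_Gamma_mat(1)[OF assms(2)]] incr_X
    by (simp add: mle_weight_def mle_precision_def)
  also have "\<dots> = (\<theta> * mle_precision N + (\<Sum>j<N. mle_weight N j * grid_incr B h (Suc j) \<omega>)) / mle_precision N"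
    by (simp add: mle_precision_def algebra_simps sum.distrib sum_distrib_left)
  finally show ?thesis using mle_precision_pos[OF assms] by (simp add: field_simps)
qed

lemma mse_mle_theta:
  assumes "N \<ge> 1" and "det (grid_cov N) \<noteq> 0"
  shows "(\<integral>\<omega>. (mle_theta M B \<theta> h N \<omega> - \<theta>)\<^sup>2 \<partial>M) = 1 / mle_precision N"
proof -
  let ?U = "\<lambda>\<omega>. \<Sum>j<N. mle_weight N j * grid_incr B h (Suc j) \<omega>"
  have "(\<integral>\<omega>. ?U \<omega> * ?U \<omega> \<partial>M) = mle_precision N"
    unfolding mle_precision_eq_form[OF assms(2), symmetric] incr_cov_def
    by (rule integral_sum_mult_sum) (auto intro: measurable_grid_incr square_integrable_grid_incr)
  then show ?thesis
    unfolding mle_theta_error[OF assms] using mle_precision_pos[OF assms]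
    by (simp add: power_divide power2_eq_square)
qed

lemma mse_mle_theta_le:
  assumes "N \<ge> 1" and "det (grid_cov N) \<noteq> 0"
  shows "(\<integral>\<omega>. (mle_theta M B \<theta> h N \<omega> - \<theta>)\<^sup>2 \<partial>M) \<le> (\<Sum>i<N. \<Sum>j<N. incr_cov i j) / (real N * h)\<^sup>2"
proof -
  have "(real N * h)\<^sup>2 > 0" using assms(1) step_pos by simp
  then show ?thesis
    unfolding mse_mle_theta[OF assms]
    using mle_precision_lower_bound[OF assms(2)] mle_precision_pos[OF assms]
    by (simp add: field_simps)
qed

lemma mse_mle_theta_tendsto_zero:
  assumes "\<forall>N\<ge>1. det (grid_cov N) \<noteq> 0" and "incr_autocov \<longlonglongrightarrow> 0"
  shows "(\<lambda>N. \<integral>\<omega>. (mle_theta M B \<theta> h N \<omega> - \<theta>)\<^sup>2 \<partial>M) \<longlonglongrightarrow> 0"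
proof (rule Lim_null_comparison)
  let ?mean = "\<lambda>N. (\<Sum>k<N. \<bar>incr_autocov k\<bar>) / real N"
  show "(\<lambda>N. 2 / h\<^sup>2 * ?mean N) \<longlonglongrightarrow> 0"
    using tendsto_mult_right_zero[OF Cesaro_mean_tendsto_zero[OF abs_ge_zero tendsto_rabs_zero[OF assms(2)]]] .
  show "\<forall>\<^sub>F N in sequentially. norm (\<integral>\<omega>. (mle_theta M B \<theta> h N \<omega> - \<theta>)\<^sup>2 \<partial>M) \<le> 2 / h\<^sup>2 * ?mean N"
    unfolding eventually_sequentially
  proof (intro exI[of _ 1] allI impI)
    fix N :: nat assume N: "1 \<le> N"
    have "(\<Sum>i<N. \<Sum>j<N. incr_cov i j) \<le> (\<Sum>i<N. \<Sum>j<N. \<bar>incr_autocov (if j \<le> i then i - j else j - i)\<bar>)"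
      by (intro sum_mono) (simp add: incr_cov_eq_incr_autocov)
    also have "\<dots> \<le> 2 * real N * (\<Sum>k<N. \<bar>incr_autocov k\<bar>)" by (rule Toeplitz_sum_le) simp
    finally have bound: "(\<Sum>i<N. \<Sum>j<N. incr_cov i j) / (real N * h)\<^sup>2 \<le> 2 / h\<^sup>2 * ?mean N"
      using N step_pos by (simp add: field_simps power2_eq_square divide_right_mono)
    have "0 \<le> (\<integral>\<omega>. (mle_theta M B \<theta> h N \<omega> - \<theta>)\<^sup>2 \<partial>M)" by simp
    then show "norm (\<integral>\<omega>. (mle_theta M B \<theta> h N \<omega> - \<theta>)\<^sup>2 \<partial>M) \<le> 2 / h\<^sup>2 * ?mean N"
      using order.trans[OF mse_mle_theta_le[OF N assms(1)[rule_format, OF N]] bound] by simp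
  qed
qed

end

theorem theorem2p5:
  fixes M :: "'a measure" and B :: "real \<Rightarrow> 'a \<Rightarrow> real" and \<theta> h :: real
  assumes "prob_space M"
    and "gaussian_process M B" and "centered_process M B" and "stationary_increments M B"
    and "\<forall>\<omega>\<in>space M. B 0 \<omega> = 0"
    and "h > 0"
    and "\<forall>N\<ge>1. det (cov_matrix M (\<lambda>k. B (real k * h)) N) \<noteq> 0"
    and "(\<lambda>k::nat. \<integral>\<omega>. (B (real (Suc k) * h) \<omega> - B (real k * h) \<omega>) * B h \<omega> \<partial>M)
           \<longlonglongrightarrow> 0"
  shows "(\<lambda>N. \<integral>\<omega>. (mle_theta M B \<theta> h N \<omega> - \<theta>)\<^sup>2 \<partial>M) \<longlonglongrightarrow> 0"
proof -
  interpret gaussian_stationary_increments M B h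
    using assms(1-6) by (simp add: gaussian_stationary_increments_def)
  show ?thesis
    using mse_mle_theta_tendsto_zero assms(7,8) unfolding incr_autocov_def[abs_def] by blast
qed

end
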